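(* Let $(A,\mathcal{A})$, $(B,\mathcal{B})$ be measurable spaces and $j:A\times B\to\mathbb{R}$ a measurable mapping. Let $(\mathfrak{a},\mathfrak{b})$ be an $A\times B$-valued random variable. If $\sigma(j(\mathfrak{a},\mathfrak{b}),\mathfrak{a})$ is independent of $\mathfrak{b}$, then $j(\mathfrak{a},\mathfrak{b})$ is $\sigma(\mathfrak{a})$-measurable. *)

theory Defs
  imports "HOL-Probability.Probability"
begin

definition sigma_rv_aug :: "'w measure \<Rightarrow> ('w \<Rightarrow> 'x) \<Rightarrow> 'x measure \<Rightarrow> 'w measure" where
  "sigma_rv_aug M X MX =
     sigma (space M) (sets (vimage_algebra (space M) X MX) \<union> null_sets M)"

end

theory Submission
  imports Defs
begin

text \<open>Write \<open>X = j(a,b)\<close> and \<open>E = {X \<in> S}\<close>. Since \<open>\<sigma>(a) \<subseteq> \<sigma>(X,a)\<close> and \<open>\<sigma>(X,a)\<close> is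
  independent of \<open>\<sigma>(b)\<close>, the functions \<open>1\<^sub>E\<close> and \<open>\<bbbE>(1\<^sub>E | \<sigma>(a))\<close> have the same integral
  \<open>P({a \<in> A} \<inter> E) P(b \<in> B)\<close> over every rectangle \<open>{a \<in> A} \<inter> {b \<in> B}\<close>, hence over every set of
  \<open>\<sigma>(a,b)\<close>. As \<open>\<bbbE>(1\<^sub>E | \<sigma>(a))\<close> is \<open>\<sigma>(a,b)\<close>-measurable, it is \<open>\<bbbE>(1\<^sub>E | \<sigma>(a,b)) = 1\<^sub>E\<close> almost
  surely, the last equation because \<open>E \<in> \<sigma>(a,b)\<close>. So \<open>E\<close> differs from a \<open>\<sigma>(a)\<close>-set by a
  null set.\<close>

lemma sets_vimage_algebra_subset:
  assumes h: "h \<in> measurable N M" and g: "g \<in> X \<rightarrow> space N"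
    and f: "\<And>x. x \<in> X \<Longrightarrow> f x = h (g x)"
  shows "sets (vimage_algebra X f M) \<subseteq> sets (vimage_algebra X g N)"
proof (rule sets_image_in_sets)
  have "(\<lambda>x. h (g x)) \<in> measurable (vimage_algebra X g N) M"
    using measurable_vimage_algebra1[OF g] h by (rule measurable_comp[unfolded comp_def])
  then show "f \<in> measurable (vimage_algebra X g N) M"
    using f by (subst measurable_cong) auto
qed simp

lemma nn_integral_vimage_pair_eqI:
  fixes f :: "'w \<Rightarrow> 'a \<times> 'b"
  assumes f[measurable]: "f \<in> measurable M (MA \<Otimes>\<^sub>M MB)"
    and [measurable]: "g \<in> borel_measurable M" "g' \<in> borel_measurable M"
    and rect: "\<And>A B. A \<in> sets MA \<Longrightarrow> B \<in> sets MB \<Longrightarrow>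
      (\<integral>\<^sup>+x\<in>f -` (A \<times> B) \<inter> space M. g x \<partial>M) = (\<integral>\<^sup>+x\<in>f -` (A \<times> B) \<inter> space M. g' x \<partial>M)"
    and finite: "(\<integral>\<^sup>+x. g x \<partial>M) \<noteq> \<infinity>"
    and C: "C \<in> sets (MA \<Otimes>\<^sub>M MB)"
  shows "(\<integral>\<^sup>+x\<in>f -` C \<inter> space M. g x \<partial>M) = (\<integral>\<^sup>+x\<in>f -` C \<inter> space M. g' x \<partial>M)"
proof -
  have distr_density: "emeasure (distr (density M k) (MA \<Otimes>\<^sub>M MB) f) D = (\<integral>\<^sup>+x\<in>f -` D \<inter> space M. k x \<partial>M)"
    if [measurable]: "k \<in> borel_measurable M" and D: "D \<in> sets (MA \<Otimes>\<^sub>M MB)" for k D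
    using D by (simp add: emeasure_distr emeasure_density)
  let ?R = "{A \<times> B | A B. A \<in> sets MA \<and> B \<in> sets MB}"
  have "distr (density M g) (MA \<Otimes>\<^sub>M MB) f = distr (density M g') (MA \<Otimes>\<^sub>M MB) f"
  proof (rule measure_eqI_generator_eq[OF Int_stable_pair_measure_generator,
        where \<Omega>="space MA \<times> space MB" and A="\<lambda>_. space MA \<times> space MB"])
    show "?R \<subseteq> Pow (space MA \<times> space MB)"
      using sets.sets_into_space[of _ MA] sets.sets_into_space[of _ MB] by blast
    show "emeasure (distr (density M g) (MA \<Otimes>\<^sub>M MB) f) R = emeasure (distr (density M g') (MA \<Otimes>\<^sub>M MB) f) R"
      if "R \<in> ?R" for R
      using that by (auto simp: distr_density rect)
    have "f -` (space MA \<times> space MB) \<inter> space M = space M"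
      using measurable_space[OF f] by (auto simp: space_pair_measure)
    moreover have "(\<integral>\<^sup>+x\<in>space M. g x \<partial>M) = (\<integral>\<^sup>+x. g x \<partial>M)"
      by (rule nn_integral_cong) simp
    ultimately show "emeasure (distr (density M g) (MA \<Otimes>\<^sub>M MB) f) (space MA \<times> space MB) \<noteq> \<infinity>"
      using finite by (simp add: distr_density)
  qed (auto simp: sets_pair_measure)
  then show ?thesis
    using C by (metis distr_density assms(2,3))
qed

lemma (in prob_space) nn_cond_exp_indicator_indep:
  assumes "subalgebra M F" and B: "B \<in> events"
    and indep: "\<And>A. A \<in> sets F \<Longrightarrow> prob (A \<inter> B) = prob A * prob B"
  shows "AE x in M. nn_cond_exp M F (indicator B) x = ennreal (prob B)"
proof -
  interpret finite_measure_subalgebra M F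
    by unfold_locales fact
  have "AE x in M. ennreal (prob B) = nn_cond_exp M F (indicator B) x"
  proof (rule nn_cond_exp_charact)
    fix A assume A: "A \<in> sets F"
    then have "A \<in> events"
      using subalg by (auto simp: subalgebra_def)
    with B have "(\<integral>\<^sup>+x\<in>A. indicator B x \<partial>M) = emeasure M (A \<inter> B)"
      by (simp add: indicator_inter_arith[symmetric] mult.commute)
    also have "\<dots> = ennreal (prob B) * emeasure M A"
      using A by (simp add: emeasure_eq_measure indep ennreal_mult mult.commute)
    also have "\<dots> = (\<integral>\<^sup>+x\<in>A. ennreal (prob B) \<partial>M)"
      using \<open>A \<in> events\<close> by (rule nn_integral_cmult_indicator[symmetric])
    finally show "(\<integral>\<^sup>+x\<in>A. indicator B x \<partial>M) = (\<integral>\<^sup>+x\<in>A. ennreal (prob B) \<partial>M)" .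
  qed (use B in auto)
  then show ?thesis
    by (simp add: eq_commute)
qed

lemma (in prob_space) set_nn_integral_cond_exp_indep:
  assumes subalg: "subalgebra M F" and A: "A \<in> sets F" and B: "B \<in> events"
    and indep: "\<And>A. A \<in> sets F \<Longrightarrow> prob (A \<inter> B) = prob A * prob B"
    and [measurable]: "g \<in> borel_measurable M"
  shows "(\<integral>\<^sup>+x\<in>A \<inter> B. nn_cond_exp M F g x \<partial>M) = (\<integral>\<^sup>+x\<in>A. g x \<partial>M) * prob B"
proof -
  interpret finite_measure_subalgebra M F
    by unfold_locales fact
  have [measurable]: "(\<lambda>x. nn_cond_exp M F g x * indicator A x) \<in> borel_measurable F"
    using A by measurable
  have [measurable]: "A \<in> events"
    using A subalg by (auto simp: subalgebra_def)
  have "(\<integral>\<^sup>+x\<in>A \<inter> B. nn_cond_exp M F g x \<partial>M)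
      = (\<integral>\<^sup>+x. (nn_cond_exp M F g x * indicator A x) * indicator B x \<partial>M)"
    by (rule nn_integral_cong) (simp add: indicator_inter_arith mult.assoc)
  also have "\<dots> = (\<integral>\<^sup>+x. (nn_cond_exp M F g x * indicator A x) * nn_cond_exp M F (indicator B) x \<partial>M)"
    using B by (intro nn_cond_exp_intg[symmetric]) auto
  also have "\<dots> = (\<integral>\<^sup>+x. (nn_cond_exp M F g x * indicator A x) * prob B \<partial>M)"
    using nn_cond_exp_indicator_indep[OF subalg B indep]
    by (intro nn_integral_cong_AE) (auto elim!: AE_mp)
  also have "\<dots> = (\<integral>\<^sup>+x. indicator A x * nn_cond_exp M F g x \<partial>M) * prob B"
    by (subst nn_integral_multc) (simp_all add: mult.commute)
  also have "\<dots> = (\<integral>\<^sup>+x\<in>A. g x \<partial>M) * prob B"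
    using A by (simp add: nn_cond_exp_intg mult.commute)
  finally show ?thesis .
qed

lemma (in prob_space) nn_cond_exp_indicator_indep_eq_indicator:
  fixes a :: "'a \<Rightarrow> 'c" and b :: "'a \<Rightarrow> 'd"
  assumes ab[measurable]: "(\<lambda>\<omega>. (a \<omega>, b \<omega>)) \<in> measurable M (MA \<Otimes>\<^sub>M MB)"
    and G: "subalgebra M G" "sets (vimage_algebra (space M) a MA) \<subseteq> sets G"
    and indep: "indep_set (sets G) (sets (vimage_algebra (space M) b MB))"
    and E: "E \<in> sets G" "E \<in> sets (vimage_algebra (space M) (\<lambda>\<omega>. (a \<omega>, b \<omega>)) (MA \<Otimes>\<^sub>M MB))"
  shows "AE x in M. nn_cond_exp M (vimage_algebra (space M) a MA) (indicator E) x = indicator E x"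
proof -
  have a[measurable]: "a \<in> measurable M MA" and [measurable]: "b \<in> measurable M MB"
    using ab by (auto simp: measurable_pair_iff o_def)
  define F where "F = vimage_algebra (space M) a MA"
  define K where "K = vimage_algebra (space M) (\<lambda>\<omega>. (a \<omega>, b \<omega>)) (MA \<Otimes>\<^sub>M MB)"
  define h where "h = nn_cond_exp M F (indicator E)"
  have subalg_F: "subalgebra M F" and subalg_K: "subalgebra M K"
    unfolding F_def K_def subalgebra_def
    using sets_image_in_sets[OF refl a] sets_image_in_sets[OF refl ab] by auto
  have "sets F \<subseteq> sets K"
    unfolding F_def K_def using measurable_space[OF ab]
    by (intro sets_vimage_algebra_subset[OF measurable_fst]) auto
  then have "subalgebra K F"
    by (simp add: subalgebra_def F_def K_def)
  then have h_K[measurable]: "h \<in> borel_measurable K"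
    unfolding h_def by (rule measurable_from_subalg) simp
  have [measurable]: "E \<in> events"
    using E G by (auto simp: subalgebra_def)
  have rect: "(\<integral>\<^sup>+x\<in>(\<lambda>\<omega>. (a \<omega>, b \<omega>)) -` (A' \<times> B') \<inter> space M. indicator E x \<partial>M)
      = (\<integral>\<^sup>+x\<in>(\<lambda>\<omega>. (a \<omega>, b \<omega>)) -` (A' \<times> B') \<inter> space M. h x \<partial>M)"
    if A': "A' \<in> sets MA" and B': "B' \<in> sets MB" for A' B'
  proof -
    \<comment> \<open>Both sides are \<open>P(A \<inter> E) P(B)\<close>: on the right because \<open>\<bbbE>(1\<^sub>B | \<sigma>(a)) = P(B)\<close>.\<close>
    define A where "A = a -` A' \<inter> space M"
    define B where "B = b -` B' \<inter> space M"
    have "A \<in> sets F"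
      unfolding A_def F_def using A' by (rule in_vimage_algebra)
    then have [measurable]: "A \<in> events" and "A \<inter> E \<in> sets G"
      using subalg_F G E by (auto simp: subalgebra_def F_def)
    have "B \<in> sets (vimage_algebra (space M) b MB)"
      unfolding B_def using B' by (rule in_vimage_algebra)
    then have B_indep: "prob (D \<inter> B) = prob D * prob B" if "D \<in> sets G" for D
      using indep_setD[OF indep that] by blast
    have [measurable]: "B \<in> events"
      unfolding B_def using B' by measurable
    have "(\<integral>\<^sup>+x\<in>A \<inter> B. indicator E x \<partial>M) = emeasure M (A \<inter> E \<inter> B)"
      by (simp add: indicator_inter_arith[symmetric] Int_ac)
    also have "\<dots> = emeasure M (A \<inter> E) * prob B"
      using B_indep[OF \<open>A \<inter> E \<in> sets G\<close>] by (simp add: emeasure_eq_measure ennreal_mult)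
    also have "\<dots> = (\<integral>\<^sup>+x\<in>A \<inter> B. h x \<partial>M)"
      unfolding h_def using \<open>A \<in> sets F\<close> G(2) B_indep
      by (subst set_nn_integral_cond_exp_indep[OF subalg_F])
        (auto simp: F_def indicator_inter_arith[symmetric] mult.commute)
    moreover have "(\<lambda>\<omega>. (a \<omega>, b \<omega>)) -` (A' \<times> B') \<inter> space M = A \<inter> B"
      by (auto simp: A_def B_def)
    ultimately show ?thesis
      by simp
  qed
  have K_integrals: "(\<integral>\<^sup>+x\<in>C. indicator E x \<partial>M) = (\<integral>\<^sup>+x\<in>C. h x \<partial>M)" if "C \<in> sets K" for C
  proof -
    obtain C' where C': "C' \<in> sets (MA \<Otimes>\<^sub>M MB)" "C = (\<lambda>\<omega>. (a \<omega>, b \<omega>)) -` C' \<inter> space M"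
      using \<open>C \<in> sets K\<close> measurable_space[OF ab] unfolding K_def
      by (subst (asm) sets_vimage_algebra2) auto
    have "(\<integral>\<^sup>+x. indicator E x \<partial>M) \<noteq> \<infinity>"
      by (simp add: emeasure_eq_measure)
    then show ?thesis
      unfolding C'(2) by (intro nn_integral_vimage_pair_eqI[OF ab _ _ rect _ C'(1)]) (simp_all add: h_def)
  qed
  interpret K: finite_measure_subalgebra M K
    by unfold_locales (fact subalg_K)
  have "AE x in M. h x = nn_cond_exp M K (indicator E) x"
    using K_integrals by (intro K.nn_cond_exp_charact) auto
  moreover have "AE x in M. indicator E x = nn_cond_exp M K (indicator E) x"
    using E(2) by (intro K.nn_cond_exp_F_meas) (simp add: K_def)
  ultimately show ?thesis
    unfolding h_def F_def by eventually_elim simp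
qed

lemma space_sigma_rv_aug[simp]: "space (sigma_rv_aug M a MA) = space M"
  by (simp add: sigma_rv_aug_def space_measure_of_conv)

lemma sets_sigma_rv_aug_if_AE_eq:
  assumes a: "a \<in> measurable M MA" and A: "A \<in> sets (vimage_algebra (space M) a MA)"
    and E: "E \<in> sets M" and AE: "AE x in M. x \<in> E \<longleftrightarrow> x \<in> A"
  shows "E \<in> sets (sigma_rv_aug M a MA)"
proof -
  have "sets (vimage_algebra (space M) a MA) \<union> null_sets M \<subseteq> Pow (space M)"
    using sets.sets_into_space[of _ "vimage_algebra (space M) a MA"] sets.sets_into_space[of _ M]
    by auto
  then have aug: "X \<in> sets (sigma_rv_aug M a MA)"
    if "X \<in> sets (vimage_algebra (space M) a MA) \<union> null_sets M" for X
    unfolding sigma_rv_aug_def using that by (simp add: sets_measure_of sigma_sets.Basic)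
  have "A \<in> sets M"
    using A sets_image_in_sets[OF refl a] by auto
  then have "{x \<in> space M. \<not> (x \<in> E \<longleftrightarrow> x \<in> A)} \<in> null_sets M"
    using AE E by (subst (asm) AE_iff_null) auto
  then have "E - A \<in> null_sets M" "A - E \<in> null_sets M"
    using E \<open>A \<in> sets M\<close> sets.sets_into_space[OF E] sets.sets_into_space[OF \<open>A \<in> sets M\<close>]
    by (auto elim!: null_sets_subset)
  moreover have "E = (A \<union> (E - A)) - (A - E)"
    by blast
  ultimately show ?thesis
    using A aug by (metis UnI1 UnI2 sets.Diff sets.Un)
qed

lemma sets_sigma_rv_aug_if_nn_cond_exp_indicator:
  assumes a: "a \<in> measurable M MA" and E: "E \<in> sets M"
    and AE: "AE x in M. nn_cond_exp M (vimage_algebra (space M) a MA) (indicator E) x = indicator E x"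
  shows "E \<in> sets (sigma_rv_aug M a MA)"
proof (rule sets_sigma_rv_aug_if_AE_eq[OF a _ E])
  let ?F = "vimage_algebra (space M) a MA"
  have "{x \<in> space ?F. nn_cond_exp M ?F (indicator E) x = 1} \<in> sets ?F"
    by measurable
  then show "{x \<in> space M. nn_cond_exp M ?F (indicator E) x = 1} \<in> sets ?F"
    by simp
  show "AE x in M. x \<in> E \<longleftrightarrow> x \<in> {x \<in> space M. nn_cond_exp M ?F (indicator E) x = 1}"
    using AE by (rule AE_mp) (auto intro!: AE_I2 simp: indicator_def)
qed

theorem lemma6p1:
  fixes M :: "'w measure" and MA :: "'a measure" and MB :: "'b measure"
    and j :: "'a \<times> 'b \<Rightarrow> real" and a :: "'w \<Rightarrow> 'a" and b :: "'w \<Rightarrow> 'b"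
  assumes "prob_space M"
    and "j \<in> borel_measurable (MA \<Otimes>\<^sub>M MB)"
    and "(\<lambda>\<omega>. (a \<omega>, b \<omega>)) \<in> measurable M (MA \<Otimes>\<^sub>M MB)"
    and "prob_space.indep_set M
           (sets (vimage_algebra (space M) (\<lambda>\<omega>. (j (a \<omega>, b \<omega>), a \<omega>)) (borel \<Otimes>\<^sub>M MA)))
           (sets (vimage_algebra (space M) b MB))"
  shows "(\<lambda>\<omega>. j (a \<omega>, b \<omega>)) \<in> borel_measurable (sigma_rv_aug M a MA)"
proof -
  interpret prob_space M by fact
  note j[measurable] = assms(2) and ab[measurable] = assms(3)
  have a: "a \<in> measurable M MA"
    using ab by (simp add: measurable_pair_iff o_def)
  let ?X = "\<lambda>\<omega>. j (a \<omega>, b \<omega>)"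
  let ?Xa = "\<lambda>\<omega>. (j (a \<omega>, b \<omega>), a \<omega>)"
  let ?G = "vimage_algebra (space M) ?Xa (borel \<Otimes>\<^sub>M MA)"
  let ?K = "vimage_algebra (space M) (\<lambda>\<omega>. (a \<omega>, b \<omega>)) (MA \<Otimes>\<^sub>M MB)"
  have Xa: "?Xa \<in> measurable M (borel \<Otimes>\<^sub>M MA)"
    by measurable
  have "subalgebra M ?G"
    using sets_image_in_sets[OF refl Xa] by (simp add: subalgebra_def)
  moreover have "sets (vimage_algebra (space M) a MA) \<subseteq> sets ?G"
    using measurable_space[OF Xa] by (intro sets_vimage_algebra_subset[OF measurable_snd]) auto
  ultimately have G: "subalgebra M ?G" "sets (vimage_algebra (space M) a MA) \<subseteq> sets ?G"
    by auto
  have X_G: "sets (vimage_algebra (space M) ?X borel) \<subseteq> sets ?G"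
    using measurable_space[OF Xa] by (intro sets_vimage_algebra_subset[OF measurable_fst]) auto
  have X_K: "sets (vimage_algebra (space M) ?X borel) \<subseteq> sets ?K"
    using measurable_space[OF ab] by (intro sets_vimage_algebra_subset[OF j]) auto
  show ?thesis
  proof (rule borel_measurableI)
    fix S :: "real set" assume "open S"
    then have "?X -` S \<inter> space M \<in> sets (vimage_algebra (space M) ?X borel)"
      by (intro in_vimage_algebra) simp
    then have "AE x in M. nn_cond_exp M (vimage_algebra (space M) a MA) (indicator (?X -` S \<inter> space M)) x
        = indicator (?X -` S \<inter> space M) x"
      using X_G X_K assms(4) by (intro nn_cond_exp_indicator_indep_eq_indicator[OF ab G]) auto
    then show "?X -` S \<inter> space (sigma_rv_aug M a MA) \<in> sets (sigma_rv_aug M a MA)"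
      using \<open>open S\<close> by (simp add: sets_sigma_rv_aug_if_nn_cond_exp_indicator[OF a])
  qed
qed

end
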